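(* There exist permutations $\pi$ (one on $n$ keys for infinitely many $n$) such that $\mathrm{LIB}(\pi)=\Theta(\lg\lg n\cdot \mathrm{IB}(\pi))$.
   Context: For a permutation $\pi$ of $n$ keys, let $P$ be a static balanced binary tree whose leaves are the keys of $\pi$ in the order of $\pi$. For each internal vertex $v$ of $P$, list the leaves below $v$ in sorted key order, labeling each L or R according to whether it lies in the left or right subtree of $v$. $\mathrm{IB}(v)$ is the number of switches between L and R, $\mathrm{IB}(\pi)=\sum_v \mathrm{IB}(v)$. With $S(v)$ the decomposition of the labeled sequence into the minimal number of runs of equal labels, $\mathrm{LIB}(v)=\sum_{r\in S(v)}\lg(|r|+1)$ and $\mathrm{LIB}(\pi)=\sum_v\mathrm{LIB}(v)$. *)

theory Defs
  imports Complex_Main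
begin

(* A permutation of n keys: a list containing each of 0,...,n-1 exactly once,
   read left to right as the leaf order of the static tree. *)
definition is_perm :: "nat \<Rightarrow> nat list \<Rightarrow> bool" where
  "is_perm n xs \<longleftrightarrow> distinct xs \<and> set xs = {0..<n}"

(* Labeled sequence at an internal vertex with left leaves ls and right leaves rs:
   leaves in sorted key order, True = L, False = R. *)
definition node_labels :: "nat list \<Rightarrow> nat list \<Rightarrow> bool list" where
  "node_labels ls rs = map (\<lambda>k. k \<in> set ls) (sort (ls @ rs))"

definition switches :: "bool list \<Rightarrow> nat" where
  "switches bs = card {i. Suc i < length bs \<and> bs ! i \<noteq> bs ! Suc i}"

function run_lengths :: "bool list \<Rightarrow> nat list" where
  "run_lengths [] = []"
| "run_lengths (x # xs) =
     Suc (length (takeWhile (\<lambda>y. y = x) xs)) # run_lengths (dropWhile (\<lambda>y. y = x) xs)"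
  by pat_completeness auto
termination
  by (relation "measure length") (auto simp: le_imp_less_Suc length_dropWhile_le)

definition lg :: "real \<Rightarrow> real" where
  "lg x = log 2 x"

definition LIB_node :: "bool list \<Rightarrow> real" where
  "LIB_node bs = (\<Sum>r\<leftarrow>run_lengths bs. lg (real r + 1))"

function IB_tree :: "nat list \<Rightarrow> nat" where
  "IB_tree xs = (if length xs \<le> 1 then 0 else
     (let m = length xs div 2; ls = take m xs; rs = drop m xs in
      switches (node_labels ls rs) + IB_tree ls + IB_tree rs))"
  by pat_completeness auto
termination
  by (relation "measure length") auto

function LIB_tree :: "nat list \<Rightarrow> real" where
  "LIB_tree xs = (if length xs \<le> 1 then 0 else
     (let m = length xs div 2; ls = take m xs; rs = drop m xs in
      LIB_node (node_labels ls rs) + LIB_tree ls + LIB_tree rs))"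
  by pat_completeness auto
termination
  by (relation "measure length") auto

definition IB :: "nat list \<Rightarrow> nat" where "IB \<pi> = IB_tree \<pi>"
definition LIB :: "nat list \<Rightarrow> real" where "LIB \<pi> = LIB_tree \<pi>"

end

theory Submission
  imports Defs
begin

(* The permutation block_perm B t consists of 2^t sorted blocks of B consecutive keys; at every
   vertex above the blocks the left subtree holds the even-numbered and the right subtree the
   odd-numbered blocks of the vertex's key range. Such a vertex at height h therefore sees 2^h
   alternating runs of exactly B keys and contributes 2^h - 1 to IB and 2^h lg (B + 1) to LIB,
   while a sorted block has IB = B - 1 and LIB at most B lg B. For B = t = 2^b and n = 2^t B keys
   this makes IB between B 2^B and 2 B 2^B, LIB between b B 2^B and (2b + 1) B 2^B, and
   lg lg n lies between b and b + 1. *)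


function tree_cost :: "(bool list \<Rightarrow> 'a::comm_monoid_add) \<Rightarrow> nat list \<Rightarrow> 'a" where
  "tree_cost c xs = (if length xs \<le> 1 then 0 else
     (let m = length xs div 2; ls = take m xs; rs = drop m xs in
      c (node_labels ls rs) + tree_cost c ls + tree_cost c rs))"
  by pat_completeness auto
termination
  by (relation "measure (length \<circ> snd)") auto

declare tree_cost.simps [simp del]

lemma tree_cost_short: "length xs \<le> 1 \<Longrightarrow> tree_cost c xs = 0"
  by (simp add: tree_cost.simps)

lemma tree_cost_split:
  assumes "2 \<le> length xs"
  shows "tree_cost c xs =
    c (node_labels (take (length xs div 2) xs) (drop (length xs div 2) xs))
    + tree_cost c (take (length xs div 2) xs) + tree_cost c (drop (length xs div 2) xs)"
  using assms by (subst tree_cost.simps) (simp add: Let_def)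

lemma IB_eq_tree_cost: "IB xs = tree_cost switches xs"
  unfolding IB_def
  by (induction xs rule: IB_tree.induct) (simp add: tree_cost.simps Let_def)

lemma LIB_eq_tree_cost: "LIB xs = tree_cost LIB_node xs"
  unfolding LIB_def
  by (induction xs rule: LIB_tree.induct) (simp add: tree_cost.simps Let_def)

lemma length_node_labels: "length (node_labels ls rs) = length ls + length rs"
  by (simp add: node_labels_def)

lemma sort_map_strict_mono:
  fixes g :: "'a::linorder \<Rightarrow> 'b::linorder"
  assumes "strict_mono g"
  shows "sort (map g xs) = map g (sort xs)"
proof -
  have "insort (g x) (map g ys) = map g (insort x ys)" for x ys
    by (induction ys) (auto simp: strict_mono_less_eq[OF assms])
  then show ?thesis by (induction xs) simp_all
qed

lemma node_labels_map_strict_mono: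
  assumes "strict_mono g"
  shows "node_labels (map g ls) (map g rs) = node_labels ls rs"
proof -
  have "inj g" using assms strict_mono_imp_inj_on by blast
  then show ?thesis
    unfolding node_labels_def map_append[symmetric] sort_map_strict_mono[OF assms]
    by (simp add: inj_image_mem_iff)
qed

lemma tree_cost_map_strict_mono:
  assumes "strict_mono g"
  shows "tree_cost c (map g xs) = tree_cost c xs"
proof (induction c xs rule: tree_cost.induct)
  case (1 c xs)
  show ?case
  proof (cases "length xs \<le> 1")
    case True
    then show ?thesis by (simp add: tree_cost_short)
  next
    case False
    then show ?thesis
      using 1 tree_cost_split[of xs c] tree_cost_split[of "map g xs" c]
      by (simp add: take_map drop_map node_labels_map_strict_mono[OF assms])
  qed
qed

lemma tree_cost_nonneg:
  fixes c :: "bool list \<Rightarrow> 'a::ordered_comm_monoid_add"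
  assumes "\<And>bs. 0 \<le> c bs"
  shows "0 \<le> tree_cost c xs"
proof (induction xs rule: length_induct)
  case (1 xs)
  show ?case
  proof (cases "length xs \<le> 1")
    case True
    then show ?thesis by (simp add: tree_cost_short)
  next
    case False
    then show ?thesis
      using 1 assms tree_cost_split[of xs c] by (simp add: add_nonneg_nonneg)
  qed
qed

lemma tree_cost_le_depth_times_length:
  fixes c :: "bool list \<Rightarrow> 'a::linordered_semidom"
  assumes cost: "\<And>bs. c bs \<le> of_nat (length bs)" and "length xs \<le> 2 ^ d"
  shows "tree_cost c xs \<le> of_nat (d * length xs)"
  using \<open>length xs \<le> 2 ^ d\<close>
proof (induction d arbitrary: xs)
  case 0
  then show ?case by (simp add: tree_cost_short)
next
  case (Suc d)
  show ?case
  proof (cases "length xs \<le> 1")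
    case True
    then show ?thesis by (simp add: tree_cost_short)
  next
    case False
    let ?m = "length xs div 2"
    have halves: "length (take ?m xs) \<le> 2 ^ d" "length (drop ?m xs) \<le> 2 ^ d"
      using Suc.prems by auto
    have "tree_cost c xs \<le> of_nat (length xs) + of_nat (d * ?m) + of_nat (d * (length xs - ?m))"
      using tree_cost_split[of xs c] False cost[of "node_labels (take ?m xs) (drop ?m xs)"]
        Suc.IH[OF halves(1)] Suc.IH[OF halves(2)]
      by (simp add: length_node_labels add_mono)
    also have "\<dots> = of_nat (Suc d * length xs)"
    proof -
      have "d * ?m + d * (length xs - ?m) = d * length xs"
        by (simp flip: add_mult_distrib2)
      then show ?thesis by (metis add.assoc mult_Suc of_nat_add)
    qed
    finally show ?thesis .
  qed
qed

lemma run_lengths_replicate_append: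
  assumes "0 < k" and "rest = [] \<or> hd rest \<noteq> x"
  shows "run_lengths (replicate k x @ rest) = k # run_lengths rest"
proof -
  obtain k' where k: "k = Suc k'" using assms(1) by (cases k) auto
  have "takeWhile (\<lambda>y. y = x) rest = []" "dropWhile (\<lambda>y. y = x) rest = rest"
    using assms(2) by (cases rest; simp)+
  moreover have "takeWhile (\<lambda>y. y = x) (replicate k' x @ rest)
      = replicate k' x @ takeWhile (\<lambda>y. y = x) rest"
    by (rule takeWhile_append2) simp
  moreover have "dropWhile (\<lambda>y. y = x) (replicate k' x @ rest) = dropWhile (\<lambda>y. y = x) rest"
    by (rule dropWhile_append2) simp
  ultimately show ?thesis by (simp add: k)
qed

lemma run_lengths_replicate: "0 < k \<Longrightarrow> run_lengths (replicate k x) = [k]"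
  using run_lengths_replicate_append[of k "[]" x] by simp

lemma sum_list_run_lengths: "sum_list (run_lengths bs) = length bs"
  by (induction bs rule: run_lengths.induct)
    (simp_all, metis length_append takeWhile_dropWhile_id)

lemma switches_Cons_Cons:
  "switches (x # y # ys) = (if x = y then 0 else 1) + switches (y # ys)"
proof -
  let ?A = "{i. Suc i < length (y # ys) \<and> (y # ys) ! i \<noteq> (y # ys) ! Suc i}"
  have "{i. Suc i < length (x # y # ys) \<and> (x # y # ys) ! i \<noteq> (x # y # ys) ! Suc i}
      = (if x = y then {} else {0}) \<union> Suc ` ?A"
  proof (rule set_eqI)
    show "i \<in> {i. Suc i < length (x # y # ys) \<and> (x # y # ys) ! i \<noteq> (x # y # ys) ! Suc i}
        \<longleftrightarrow> i \<in> (if x = y then {} else {0}) \<union> Suc ` ?A" for i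
      by (cases i) auto
  qed
  moreover have "finite ?A" by (rule finite_subset[of _ "{..<length (y # ys)}"]) auto
  ultimately show ?thesis
    unfolding switches_def by (simp add: card_image)
qed

lemma length_run_lengths_Cons_Cons:
  "length (run_lengths (x # y # ys)) = (if x = y then 0 else 1) + length (run_lengths (y # ys))"
  by (cases "x = y") simp_all

lemma switches_eq_length_run_lengths: "switches bs = length (run_lengths bs) - 1"
proof (induction bs rule: induct_list012)
  case (3 x y ys)
  then show ?case
    by (cases "run_lengths (y # ys)") (simp_all add: switches_Cons_Cons length_run_lengths_Cons_Cons)
qed (simp_all add: switches_def)

lemma lg_Suc_le: "lg (real k + 1) \<le> real k"
proof -
  have "Suc k \<le> 2 ^ k" using less_exp[of k] by (rule Suc_leI)
  then have "real k + 1 \<le> 2 ^ k"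
    by (metis of_nat_Suc of_nat_le_iff of_nat_numeral of_nat_power add.commute)
  then show ?thesis
    unfolding lg_def by (simp add: log_le_iff powr_realpow add_pos_nonneg)
qed

lemma LIB_node_nonneg: "0 \<le> LIB_node bs"
  unfolding LIB_node_def by (rule sum_list_nonneg) (auto simp: lg_def)

lemma LIB_node_le_length: "LIB_node bs \<le> real (length bs)"
proof -
  have "LIB_node bs \<le> (\<Sum>r\<leftarrow>run_lengths bs. real r)"
    unfolding LIB_node_def by (rule sum_list_mono) (rule lg_Suc_le)
  then show ?thesis by (simp add: sum_list_of_nat sum_list_run_lengths)
qed

lemma node_labels_sorted:
  assumes "sorted (ls @ rs)" and "distinct (ls @ rs)"
  shows "node_labels ls rs = replicate (length ls) True @ replicate (length rs) False"
  using assms by (auto simp: node_labels_def sorted_sort_id intro!: replicate_eqI)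

lemma IB_sorted:
  assumes "sorted xs" and "distinct xs"
  shows "IB xs = length xs - 1"
  using assms unfolding IB_eq_tree_cost
proof (induction xs rule: length_induct)
  case (1 xs)
  show ?case
  proof (cases "length xs \<le> 1")
    case True
    then show ?thesis by (simp add: tree_cost_short)
  next
    case False
    let ?ls = "take (length xs div 2) xs" and ?rs = "drop (length xs div 2) xs"
    have "sorted (?ls @ ?rs)" "distinct (?ls @ ?rs)" using "1.prems" by simp_all
    then have "run_lengths (node_labels ?ls ?rs) = [length ?ls, length ?rs]"
      using False by (simp add: node_labels_sorted run_lengths_replicate_append run_lengths_replicate)
    then have "switches (node_labels ?ls ?rs) = 1"
      by (simp add: switches_eq_length_run_lengths)
    moreover have "tree_cost switches ?ls = length ?ls - 1" "tree_cost switches ?rs = length ?rs - 1"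
      using "1.IH" "1.prems" False by (simp_all add: sorted_wrt_take sorted_wrt_drop)
    ultimately show ?thesis
      using tree_cost_split[of xs switches] False by simp
  qed
qed

lemma run_lengths_even_div_upt:
  assumes "0 < B"
  shows "run_lengths (map (\<lambda>k. even (k div B)) [a * B..<(a + c) * B]) = replicate c B"
proof (induction c arbitrary: a)
  case 0
  then show ?case by simp
next
  case (Suc c)
  have "[a * B..<(a + Suc c) * B] = [a * B..<a * B + B] @ [Suc a * B..<(Suc a + c) * B]"
    using upt_add_eq_append[of "a * B" "a * B + B" "c * B"] by (simp add: algebra_simps)
  moreover have "map (\<lambda>k. even (k div B)) [a * B..<a * B + B] = replicate B (even a)"
    using assms by (auto intro!: replicate_eqI simp: div_nat_eqI algebra_simps)
  moreover have "hd (map (\<lambda>k. even (k div B)) [Suc a * B..<(Suc a + c) * B]) = even (Suc a)"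
    if "c \<noteq> 0"
    using assms that by (simp add: hd_map)
  ultimately show ?case
    using assms Suc.IH[of "Suc a"] by (cases c) (auto simp: run_lengths_replicate_append run_lengths_replicate)
qed

section \<open>Interleaved sorted blocks\<close>

lemma sort_is_perm: "is_perm n xs \<Longrightarrow> sort xs = [0..<n]"
  unfolding is_perm_def by (intro sorted_distinct_set_unique) simp_all

(* block k div B of the keys goes to block 2 (k div B) + d, the offset k mod B is kept *)
definition block_spread :: "nat \<Rightarrow> nat \<Rightarrow> nat \<Rightarrow> nat" where
  "block_spread B d k = k + (k div B + d) * B"

lemma strict_mono_block_spread: "strict_mono (block_spread B d)"
proof (rule strict_monoI)
  fix k k' :: nat
  assume "k < k'"
  moreover have "k div B \<le> k' div B" using \<open>k < k'\<close> by (simp add: div_le_mono)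
  ultimately show "block_spread B d k < block_spread B d k'"
    unfolding block_spread_def by (intro add_less_le_mono mult_le_mono1) simp_all
qed

lemma block_spread_div: "0 < B \<Longrightarrow> block_spread B d k div B = 2 * (k div B) + d"
  unfolding block_spread_def by simp

fun block_perm :: "nat \<Rightarrow> nat \<Rightarrow> nat list" where
  "block_perm B 0 = [0..<B]"
| "block_perm B (Suc t) =
    map (block_spread B 0) (block_perm B t) @ map (block_spread B 1) (block_perm B t)"

lemma length_block_perm: "length (block_perm B t) = 2 ^ t * B"
  by (induction t) simp_all

lemma block_perm_less:
  assumes "0 < B"
  shows "k \<in> set (block_perm B t) \<Longrightarrow> k < 2 ^ t * B"
proof (induction t arbitrary: k)
  case 0
  then show ?case by simp
next
  case (Suc t)
  then obtain k' d where "k' \<in> set (block_perm B t)" "d \<le> 1" "k = block_spread B d k'"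
    by auto
  then have "k' div B < 2 ^ t" "k div B = 2 * (k' div B) + d"
    using Suc.IH assms by (simp_all add: div_less_iff_less_mult block_spread_div)
  then have "k div B < 2 ^ Suc t" using \<open>d \<le> 1\<close> by simp
  then show ?case using assms by (simp add: div_less_iff_less_mult)
qed

lemma distinct_block_perm:
  assumes "0 < B"
  shows "distinct (block_perm B t)"
proof (induction t)
  case 0
  then show ?case by simp
next
  case (Suc t)
  have "inj_on (block_spread B d) A" for d A
    using strict_mono_block_spread strict_mono_imp_inj_on inj_on_subset by blast
  moreover have "odd (k div B)" if "k \<in> set (map (block_spread B 1) (block_perm B t))" for k
    using that assms by (auto simp: block_spread_div)
  moreover have "even (k div B)" if "k \<in> set (map (block_spread B 0) (block_perm B t))" for k
    using that assms by (auto simp: block_spread_div)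
  ultimately show ?case
    using Suc.IH by (auto simp: distinct_map simp del: set_map)
qed

lemma is_perm_block_perm:
  assumes "0 < B"
  shows "is_perm (2 ^ t * B) (block_perm B t)"
proof -
  have "set (block_perm B t) \<subseteq> {0..<2 ^ t * B}"
    using block_perm_less[OF assms] by auto
  moreover have "card (set (block_perm B t)) = card {0..<2 ^ t * B}"
    using distinct_block_perm[OF assms] by (simp add: distinct_card length_block_perm)
  ultimately have "set (block_perm B t) = {0..<2 ^ t * B}"
    by (intro card_subset_eq) simp_all
  then show ?thesis
    unfolding is_perm_def using distinct_block_perm[OF assms] by simp
qed

lemma node_labels_block_perm_Suc:
  assumes "0 < B"
  shows "node_labels (map (block_spread B 0) (block_perm B t)) (map (block_spread B 1) (block_perm B t))
    = map (\<lambda>k. even (k div B)) [0..<2 ^ Suc t * B]"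
proof -
  let ?ls = "map (block_spread B 0) (block_perm B t)"
  let ?rs = "map (block_spread B 1) (block_perm B t)"
  have perm: "is_perm (2 ^ Suc t * B) (?ls @ ?rs)"
    using is_perm_block_perm[OF assms, of "Suc t"] by simp
  have "k \<in> set ?ls \<longleftrightarrow> even (k div B)" if "k < 2 ^ Suc t * B" for k
  proof -
    have "k \<in> set (?ls @ ?rs)" using perm that by (simp add: is_perm_def)
    then show ?thesis using assms by (auto simp: block_spread_div)
  qed
  then show ?thesis
    unfolding node_labels_def sort_is_perm[OF perm] by (intro map_cong) auto
qed

lemma tree_cost_block_perm_Suc:
  assumes "0 < B"
  shows "tree_cost c (block_perm B (Suc t)) =
    c (map (\<lambda>k. even (k div B)) [0..<2 ^ Suc t * B])
    + tree_cost c (block_perm B t) + tree_cost c (block_perm B t)"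
proof -
  let ?ls = "map (block_spread B 0) (block_perm B t)"
  let ?rs = "map (block_spread B 1) (block_perm B t)"
  have "1 \<le> 2 ^ t * B" using assms by simp
  moreover have "length (?ls @ ?rs) = 2 ^ t * B + 2 ^ t * B" by (simp add: length_block_perm)
  ultimately have "2 \<le> length (?ls @ ?rs)" by linarith
  moreover have "length (?ls @ ?rs) div 2 = length ?ls" by simp
  ultimately have "tree_cost c (?ls @ ?rs) = c (node_labels ?ls ?rs) + tree_cost c ?ls + tree_cost c ?rs"
    using tree_cost_split[of "?ls @ ?rs" c] by simp
  then show ?thesis
    using node_labels_block_perm_Suc[OF assms]
    by (simp add: tree_cost_map_strict_mono strict_mono_block_spread)
qed

lemma LIB_nonneg: "0 \<le> LIB xs"
  unfolding LIB_eq_tree_cost by (rule tree_cost_nonneg) (rule LIB_node_nonneg)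

lemma LIB_le_depth_times_length: "length xs \<le> 2 ^ d \<Longrightarrow> LIB xs \<le> real d * real (length xs)"
  unfolding LIB_eq_tree_cost
  using tree_cost_le_depth_times_length[of LIB_node xs d] LIB_node_le_length by simp

lemma IB_block_perm:
  assumes "0 < B"
  shows "real (IB (block_perm B t)) = 2 ^ t * (real B + real t - 2) + 1"
proof (induction t)
  case 0
  then show ?case using assms by (simp add: IB_sorted of_nat_diff)
next
  case (Suc t)
  have "IB (block_perm B (Suc t)) =
    switches (map (\<lambda>k. even (k div B)) [0..<2 ^ Suc t * B])
    + IB (block_perm B t) + IB (block_perm B t)"
    unfolding IB_eq_tree_cost by (rule tree_cost_block_perm_Suc[OF assms])
  moreover have "real (switches (map (\<lambda>k. even (k div B)) [0..<2 ^ Suc t * B])) = 2 ^ Suc t - 1"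
    using run_lengths_even_div_upt[OF assms, of 0 "2 ^ Suc t"]
    by (simp add: switches_eq_length_run_lengths of_nat_diff)
  ultimately show ?case
    using Suc.IH by (simp add: algebra_simps)
qed

lemma LIB_block_perm:
  assumes "0 < B"
  shows "LIB (block_perm B t) = 2 ^ t * (LIB [0..<B] + real t * lg (real B + 1))"
proof (induction t)
  case (Suc t)
  have "LIB_node (map (\<lambda>k. even (k div B)) [0..<2 ^ Suc t * B]) = 2 ^ Suc t * lg (real B + 1)"
    using run_lengths_even_div_upt[OF assms, of 0 "2 ^ Suc t"]
    by (simp add: LIB_node_def sum_list_replicate)
  then show ?case
    using Suc.IH tree_cost_block_perm_Suc[OF assms, of LIB_node t]
    by (simp add: LIB_eq_tree_cost algebra_simps)
qed simp

section \<open>The diagonal case B = t = 2 ^ b\<close>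

lemma lg_between_powers:
  assumes "2 ^ k \<le> y" and "y \<le> 2 ^ Suc k"
  shows "real k \<le> lg y" and "lg y \<le> real k + 1"
proof -
  have "0 < y" using assms(1) by (smt (verit) zero_less_power)
  show "real k \<le> lg y"
    using assms(1) unfolding lg_def by (simp add: le_log_of_power)
  have "lg y \<le> lg (2 ^ Suc k)"
    unfolding lg_def using \<open>0 < y\<close> assms(2) by simp
  also have "lg (2 ^ Suc k) = real (Suc k)"
    unfolding lg_def by (rule log_pow_cancel) simp_all
  finally show "lg y \<le> real k + 1" by simp
qed

lemma IB_block_perm_diagonal_bounds:
  assumes "2 \<le> B"
  shows "2 ^ B * real B \<le> real (IB (block_perm B B))"
    and "real (IB (block_perm B B)) \<le> 2 * (2 ^ B * real B)"
proof -
  have IB: "real (IB (block_perm B B)) = 2 ^ B * (2 * real B - 2) + 1"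
    using IB_block_perm[of B B] assms by simp
  have "0 \<le> (2::real) ^ B * (real B - 2)" using assms by simp
  moreover have "2 ^ B * (2 * real B - 2) = 2 ^ B * real B + (2::real) ^ B * (real B - 2)"
    by (simp add: algebra_simps)
  ultimately show "2 ^ B * real B \<le> real (IB (block_perm B B))"
    unfolding IB by linarith
  have "2 * (2 ^ B * real B) = 2 ^ B * (2 * real B - 2) + 2 * (2::real) ^ B"
    by (simp add: algebra_simps)
  moreover have "(1::real) \<le> 2 ^ B" by simp
  ultimately show "real (IB (block_perm B B)) \<le> 2 * (2 ^ B * real B)"
    unfolding IB by linarith
qed

lemma LIB_block_perm_diagonal_bounds:
  fixes b :: nat
  defines "B \<equiv> 2 ^ b :: nat"
  shows "real b * (2 ^ B * real B) \<le> LIB (block_perm B B)"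
    and "LIB (block_perm B B) \<le> (2 * real b + 1) * (2 ^ B * real B)"
proof -
  define L where "L = LIB [0..<B]"
  have LIB: "LIB (block_perm B B) = 2 ^ B * (L + real B * lg (real B + 1))"
    using LIB_block_perm[of B B] unfolding L_def B_def by simp
  have L: "0 \<le> L" "L \<le> real b * real B"
    unfolding L_def using LIB_nonneg LIB_le_depth_times_length[of "[0..<B]" b]
    by (simp_all add: B_def)
  have lgB: "real b \<le> lg (real B + 1)" "lg (real B + 1) \<le> real b + 1"
    by (rule lg_between_powers; simp add: B_def)+
  have "real b * (2 ^ B * real B) = 2 ^ B * (real B * real b)" by simp
  also have "\<dots> \<le> 2 ^ B * (L + real B * lg (real B + 1))"
    using lgB L by (intro mult_left_mono add_increasing) simp_all
  finally show "real b * (2 ^ B * real B) \<le> LIB (block_perm B B)"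
    unfolding LIB .
  have "2 ^ B * (L + real B * lg (real B + 1)) \<le> 2 ^ B * (real b * real B + real B * (real b + 1))"
    using L lgB by (intro mult_left_mono add_mono) simp_all
  then show "LIB (block_perm B B) \<le> (2 * real b + 1) * (2 ^ B * real B)"
    unfolding LIB by (simp add: algebra_simps)
qed

lemma lg_lg_diagonal_bounds:
  fixes b :: nat
  defines "B \<equiv> 2 ^ b :: nat"
  shows "real b \<le> lg (lg (real (2 ^ B * B)))" and "lg (lg (real (2 ^ B * B))) \<le> real b + 1"
proof -
  have "lg (real (2 ^ B * B)) = real B + real b"
    unfolding B_def lg_def by (simp add: log_mult)
  moreover have "2 ^ b \<le> real B + real b" "real B + real b \<le> 2 ^ Suc b"
    using less_exp[of b] unfolding B_def by simp_all
  ultimately show "real b \<le> lg (lg (real (2 ^ B * B)))" "lg (lg (real (2 ^ B * B))) \<le> real b + 1"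
    using lg_between_powers by simp_all
qed

lemma LIB_block_perm_diagonal_Theta:
  assumes b: "1 \<le> b"
  defines "B \<equiv> 2 ^ b :: nat"
  shows "1 / 4 * (lg (lg (real (2 ^ B * B))) * real (IB (block_perm B B))) \<le> LIB (block_perm B B)"
    and "LIB (block_perm B B) \<le> 3 * (lg (lg (real (2 ^ B * B))) * real (IB (block_perm B B)))"
proof -
  let ?ll = "lg (lg (real (2 ^ B * B)))" and ?IB = "real (IB (block_perm B B))"
  define M :: real where "M = 2 ^ B * real B"
  have "2 \<le> B" unfolding B_def using power_increasing[OF b, of "2::nat"] by simp
  note IB = IB_block_perm_diagonal_bounds[OF this, folded M_def]
  note LIB = LIB_block_perm_diagonal_bounds[of b, folded B_def]
  note ll = lg_lg_diagonal_bounds[of b, folded B_def]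
  have M: "0 \<le> M" unfolding M_def by simp
  have "1 / 4 * (?ll * ?IB) \<le> 1 / 4 * ((real b + 1) * (2 * M))"
    using ll IB b by (intro mult_left_mono mult_mono) simp_all
  also have "\<dots> = (real b + 1) / 2 * M" by simp
  also have "\<dots> \<le> real b * M"
    using b M by (intro mult_right_mono) simp_all
  finally show "1 / 4 * (?ll * ?IB) \<le> LIB (block_perm B B)"
    using LIB(1) unfolding M_def by linarith
  have "(2 * real b + 1) * M \<le> 3 * real b * M"
    using b M by (intro mult_right_mono) simp_all
  also have "\<dots> \<le> 3 * (?ll * ?IB)"
    using ll IB M by (simp add: mult.assoc mult_mono)
  finally show "LIB (block_perm B B) \<le> 3 * (?ll * ?IB)"
    using LIB(2) unfolding M_def by linarith
qed

theorem lemma3: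
  shows "\<exists>(S :: nat set) (\<pi> :: nat \<Rightarrow> nat list).
           infinite S \<and> (\<forall>n\<in>S. is_perm n (\<pi> n)) \<and>
           (\<exists>c1 c2 :: real. \<exists>n0 :: nat. c1 > 0 \<and> c2 > 0 \<and>
              (\<forall>n\<in>S. n \<ge> n0 \<longrightarrow>
                 c1 * (lg (lg (real n)) * real (IB (\<pi> n))) \<le> LIB (\<pi> n) \<and>
                 LIB (\<pi> n) \<le> c2 * (lg (lg (real n)) * real (IB (\<pi> n)))))"
proof -
  define keys :: "nat \<Rightarrow> nat" where "keys b = 2 ^ 2 ^ b * 2 ^ b" for b
  define S where "S = keys ` {1..}"
  define \<pi> where "\<pi> n = block_perm (2 ^ inv_into {1..} keys n) (2 ^ inv_into {1..} keys n)" for n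
  have "strict_mono keys"
    unfolding keys_def by (intro strict_monoI mult_strict_mono power_strict_increasing) simp_all
  then have inj: "inj_on keys {1..}" using strict_mono_imp_inj_on inj_on_subset by blast
  then have "infinite S"
    unfolding S_def using infinite_Ici finite_imageD by blast
  moreover have "is_perm (keys b) (\<pi> (keys b)) \<and>
      1 / 4 * (lg (lg (real (keys b))) * real (IB (\<pi> (keys b)))) \<le> LIB (\<pi> (keys b)) \<and>
      LIB (\<pi> (keys b)) \<le> 3 * (lg (lg (real (keys b))) * real (IB (\<pi> (keys b))))"
    if "1 \<le> b" for b
  proof -
    have "\<pi> (keys b) = block_perm (2 ^ b) (2 ^ b)"
      unfolding \<pi>_def using inv_into_f_f[OF inj, of b] that by simp
    moreover have "keys b = 2 ^ 2 ^ b * 2 ^ b" by (rule keys_def)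
    ultimately show ?thesis
      using is_perm_block_perm[of "2 ^ b" "2 ^ b"] LIB_block_perm_diagonal_Theta[OF that] by simp
  qed
  ultimately show ?thesis
    by (intro exI[of _ S] exI[of _ \<pi>] exI[of _ "1 / 4"] exI[of _ 3] exI[of _ 0] conjI) (auto simp: S_def)
qed

end
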